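(* Let $p\in(0,1/2)$ be a constant. There is an integer $M_p$ depending only on $p$ such that for every integer $n'>M_p$ and every integer $r\ge 0$, the probability that the edge set of $G_{n',p}$ can be partitioned into at most $r$ pairwise edge-disjoint nonempty non-star bicliques is at most $$2(1-p)^{\binom{n'}{2}}\left[2\binom{n'}{2}\left(1+\left(\frac{p}{1-p}\right)^2\right)^{n'}\right]^r.$$ If $p<0.01$, the same bound holds for all $n'\ge 4$.
   Context: $G_{n',p}$ is the random graph on $n'$ vertices with each pair an edge independently with probability $p$. A non-star biclique is a complete bipartite subgraph $K_{a,b}$ with both parts of size $a,b\ge 2$. *)

theory Defs
  imports Complex_Main
begin

definition all_pairs :: "nat \<Rightarrow> nat set set" where
  "all_pairs n = {e. \<exists>a b. a < n \<and> b < n \<and> a \<noteq> b \<and> e = {a, b}}"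

definition biclique_edges :: "nat set \<Rightarrow> nat set \<Rightarrow> nat set set" where
  "biclique_edges A B = {{a, b} | a b. a \<in> A \<and> b \<in> B}"

definition nonstar_biclique :: "nat \<Rightarrow> nat set set \<Rightarrow> bool" where
  "nonstar_biclique n F \<longleftrightarrow>
     (\<exists>A B. A \<subseteq> {..<n} \<and> B \<subseteq> {..<n} \<and> A \<inter> B = {} \<and>
            card A \<ge> 2 \<and> card B \<ge> 2 \<and> F = biclique_edges A B)"

definition biclique_partitionable :: "nat \<Rightarrow> nat \<Rightarrow> nat set set \<Rightarrow> bool" where
  "biclique_partitionable n r E \<longleftrightarrow>
     (\<exists>Fs :: nat set set list. length Fs \<le> r \<and>
        (\<forall>F \<in> set Fs. nonstar_biclique n F \<and> F \<noteq> {}) \<and>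
        (\<forall>i < length Fs. \<forall>j < length Fs. i \<noteq> j \<longrightarrow> Fs ! i \<inter> Fs ! j = {}) \<and>
        \<Union>(set Fs) = E)"

definition gnp_prob :: "nat \<Rightarrow> real \<Rightarrow> (nat set set \<Rightarrow> bool) \<Rightarrow> real" where
  "gnp_prob n p P =
     (\<Sum>E \<in> {E. E \<subseteq> all_pairs n \<and> P E}.
        p ^ card E * (1 - p) ^ (card (all_pairs n) - card E))"

definition biclique_bound :: "nat \<Rightarrow> real \<Rightarrow> nat \<Rightarrow> real" where
  "biclique_bound n p r =
     2 * (1 - p) ^ (n choose 2) *
     (2 * real (n choose 2) * (1 + (p / (1 - p))^2) ^ n) ^ r"

end

theory Submission
  imports Defs
begin

text \<open>
  Put x = p / (1 - p), so that an edge set E of G(n,p) has probability (1 - p)^(n choose 2) x^|E|.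
  A partitionable E is the union of a list of at most r pairwise disjoint non-star bicliques, and
  x^|E| is the product of the weights x^|F| of the parts. Summing over all such lists bounds the
  probability by (1 - p)^(n choose 2) times the sum of W^k for k \<le> r, where W is the total weight of
  all non-star bicliques. Since T = 2 (n choose 2) (1 + x^2)^n is at least 2, it suffices to show
  W \<le> T, which makes the geometric sum at most 2 T^r.

  Write a biclique as K(a,b) with a \<le> b. Those with a = 2 weigh at most (n choose 2) (1 + x^2)^n in
  total. For a \<ge> 3 the weight x^(ab) is bounded by a product f(a) g(b), which turns the rest into a
  product of two sums over subsets. With f(a) = C z^a and g(b) = x^(3b) the rest is at most
  C ((1 + z)(1 + x^3))^n, exponentially smaller than (1 + x^2)^n for small z > 0. With
  x^(ab) \<le> x^9 x^(3(a-3)) x^(3(b-3)) it is at most x^9 ((n choose 3)(1 + x^3)^n)^2, which stays below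
  (n choose 2) (1 + x^2)^n for every n \<ge> 4 as soon as x \<le> 3/128, as is the case for p < 0.01.
\<close>

lemma sum_Pow_card:
  fixes f :: "nat \<Rightarrow> 'a :: comm_semiring_1"
  assumes "finite V"
  shows "(\<Sum>A\<in>Pow V. f (card A)) = (\<Sum>k\<le>card V. of_nat (card V choose k) * f k)"
proof -
  have "(\<Sum>A\<in>Pow V. f (card A))
      = (\<Sum>k\<le>card V. \<Sum>A | A \<in> Pow V \<and> card A = k. f (card A))"
    by (rule sum.group[symmetric]) (use assms card_mono in auto)
  also have "\<dots> = (\<Sum>k\<le>card V. of_nat (card V choose k) * f k)"
  proof (rule sum.cong[OF refl])
    fix k
    have "{A. A \<in> Pow V \<and> card A = k} = {A. A \<subseteq> V \<and> card A = k}" by auto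
    then show "(\<Sum>A | A \<in> Pow V \<and> card A = k. f (card A)) = of_nat (card V choose k) * f k"
      using n_subsets[OF assms] by simp
  qed
  finally show ?thesis .
qed

lemma sum_Pow_power_card:
  fixes y :: "'a :: comm_semiring_1"
  assumes "finite V"
  shows "(\<Sum>A\<in>Pow V. y ^ card A) = (1 + y) ^ card V"
  using sum_Pow_card[OF assms, of "\<lambda>k. y ^ k"] binomial_ring[of y 1 "card V"]
  by (simp add: add.commute)

lemma binomial_term_le_power:
  fixes t :: real
  assumes "0 \<le> t" "k \<le> n"
  shows "real (n choose k) * t ^ k \<le> (1 + t) ^ n"
proof -
  have "real (n choose k) * t ^ k \<le> (\<Sum>j\<le>n. real (n choose j) * t ^ j)"
    by (rule member_le_sum[of k _ "\<lambda>j. real (n choose j) * t ^ j"]) (use assms in auto)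
  also have "\<dots> = (1 + t) ^ n"
    using binomial_ring[of t 1 n] by (simp add: add.commute)
  finally show ?thesis .
qed

lemma binomial_le_times_binomial_diff:
  assumes "j \<le> k"
  shows "n choose k \<le> (n choose j) * (n choose (k - j))"
proof (cases "k \<le> n")
  case True
  have "(n choose k) * (k choose j) = (n choose j) * ((n - j) choose (k - j))"
    using choose_mult[OF assms True] .
  moreover have "1 \<le> k choose j" using assms by (simp add: Suc_leI)
  moreover have "(n - j) choose (k - j) \<le> n choose (k - j)" by (rule binomial_right_mono) simp
  ultimately show ?thesis
    by (metis mult.right_neutral mult_le_mono mult_le_mono2 order_trans order_refl)
qed (simp add: binomial_eq_0)

lemma sum_Pow_shifted_power_le:
  fixes y :: real
  assumes "finite V" "0 \<le> y"
  shows "(\<Sum>A\<in>Pow V. if j \<le> card A then y ^ (card A - j) else 0)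
    \<le> real (card V choose j) * (1 + y) ^ card V"
proof -
  let ?n = "card V"
  let ?b = "\<lambda>i. real (?n choose i) * y ^ i"
  have "(\<Sum>A\<in>Pow V. if j \<le> card A then y ^ (card A - j) else 0)
      = (\<Sum>k\<le>?n. real (?n choose k) * (if j \<le> k then y ^ (k - j) else 0))"
    by (rule sum_Pow_card[OF assms(1)])
  also have "\<dots> \<le> (\<Sum>k\<le>?n. if j \<le> k then real (?n choose j) * ?b (k - j) else 0)"
  proof (rule sum_mono)
    fix k
    have "real (?n choose k) \<le> real (?n choose j) * real (?n choose (k - j))" if "j \<le> k"
      using binomial_le_times_binomial_diff[OF that] by (metis of_nat_le_iff of_nat_mult)
    then show "real (?n choose k) * (if j \<le> k then y ^ (k - j) else 0)
      \<le> (if j \<le> k then real (?n choose j) * ?b (k - j) else 0)"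
      using assms(2) by (auto simp: mult.assoc[symmetric] intro: mult_right_mono)
  qed
  also have "\<dots> = real (?n choose j) * (\<Sum>k\<in>{j..?n}. ?b (k - j))"
    by (simp add: sum_distrib_left sum.If_cases Int_def atLeastAtMost_def atLeast_def conj_commute)
  also have "\<dots> \<le> real (?n choose j) * (\<Sum>i\<le>?n. ?b i)"
  proof (rule mult_left_mono)
    have "(\<Sum>k\<in>{j..?n}. ?b (k - j)) = (\<Sum>i\<in>(\<lambda>k. k - j) ` {j..?n}. ?b i)"
      by (subst sum.reindex) (auto simp: inj_on_def)
    also have "\<dots> \<le> (\<Sum>i\<le>?n. ?b i)"
      by (rule sum_mono2) (use assms(2) in auto)
    finally show "(\<Sum>k\<in>{j..?n}. ?b (k - j)) \<le> (\<Sum>i\<le>?n. ?b i)" .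
  qed simp
  also have "\<dots> = real (?n choose j) * (1 + y) ^ ?n"
    using binomial_ring[of y 1 ?n] by (simp add: add.commute)
  finally show ?thesis .
qed

lemma Suc_times_choose_Suc: "Suc k * (n choose Suc k) = (n - k) * (n choose k)"
  by (metis binomial_absorption binomial_absorb_comp)

lemma sum_powers_le_twice_power:
  fixes S T :: real
  assumes "0 \<le> S" "S \<le> T" "2 \<le> T"
  shows "(\<Sum>k\<le>r. S ^ k) \<le> 2 * T ^ r"
proof (induction r)
  case (Suc r)
  have "(\<Sum>k\<le>Suc r. S ^ k) \<le> 2 * T ^ r + T ^ Suc r"
    using Suc.IH power_mono[OF assms(2,1), of "Suc r"] by simp
  also have "\<dots> \<le> 2 * T ^ Suc r"
    using mult_right_mono[OF assms(3), of "T ^ r"] assms by simp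
  finally show ?case .
qed simp

lemma sum_prod_list_lists_length_eq:
  fixes f :: "'a \<Rightarrow> 'b :: comm_semiring_1"
  assumes "finite A"
  shows "(\<Sum>xs | set xs \<subseteq> A \<and> length xs = k. prod_list (map f xs)) = sum f A ^ k"
proof (induction k)
  case 0
  have "{xs. set xs \<subseteq> A \<and> length xs = 0} = {[]}" by auto
  then show ?case by simp
next
  case (Suc k)
  let ?L = "{xs. set xs \<subseteq> A \<and> length xs = k}"
  have "(\<Sum>xs | set xs \<subseteq> A \<and> length xs = Suc k. prod_list (map f xs))
      = (\<Sum>(xs, a)\<in>?L \<times> A. f a * prod_list (map f xs))"
    unfolding lists_length_Suc_eq by (subst sum.reindex) (auto simp: inj_split_Cons split_beta)
  also have "\<dots> = (\<Sum>xs\<in>?L. prod_list (map f xs)) * sum f A"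
    by (simp add: sum.cartesian_product[symmetric] sum_product sum.swap[of _ A] mult.commute)
  finally show ?case using Suc.IH by (simp add: mult.commute)
qed

lemma sum_prod_list_lists_length_le:
  fixes f :: "'a \<Rightarrow> 'b :: comm_semiring_1"
  assumes "finite A"
  shows "(\<Sum>xs | set xs \<subseteq> A \<and> length xs \<le> r. prod_list (map f xs))
    = (\<Sum>k\<le>r. sum f A ^ k)"
proof -
  have "{xs. set xs \<subseteq> A \<and> length xs \<le> r}
      = (\<Union>k\<le>r. {xs. set xs \<subseteq> A \<and> length xs = k})"
    by auto
  then show ?thesis
    by (simp, subst sum.UNION_disjoint)
      (auto simp: assms finite_lists_length_eq sum_prod_list_lists_length_eq)
qed

lemma power_sum_list:
  fixes x :: "'a :: monoid_mult"
  shows "x ^ sum_list (map g xs) = prod_list (map (\<lambda>y. x ^ g y) xs)"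
  by (induction xs) (simp_all add: power_add)

lemma card_Union_list_disjoint:
  assumes "\<forall>F\<in>set Fs. finite F"
    and "\<forall>i<length Fs. \<forall>j<length Fs. i \<noteq> j \<longrightarrow> Fs ! i \<inter> Fs ! j = {}"
  shows "card (\<Union>(set Fs)) = sum_list (map card Fs)"
proof -
  have "\<Union>(set Fs) = (\<Union>i<length Fs. Fs ! i)"
    by (auto simp: set_conv_nth)
  then have "card (\<Union>(set Fs)) = card (\<Union>i<length Fs. Fs ! i)"
    by simp
  also have "\<dots> = (\<Sum>i<length Fs. card (Fs ! i))"
    by (rule card_UN_disjoint) (use assms in auto)
  also have "\<dots> = sum_list (map card Fs)"
    by (simp add: sum_list_sum_nth atLeast0LessThan)
  finally show ?thesis .
qed

lemma all_pairs_eq: "all_pairs n = {e. e \<subseteq> {..<n} \<and> card e = 2}"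
  unfolding all_pairs_def by (auto simp: card_2_iff)

lemma card_all_pairs: "card (all_pairs n) = n choose 2"
  unfolding all_pairs_eq using n_subsets[of "{..<n}" 2] by simp

lemma finite_all_pairs: "finite (all_pairs n)"
  unfolding all_pairs_eq by (rule finite_subset[of _ "Pow {..<n}"]) auto

lemma biclique_edges_commute: "biclique_edges A B = biclique_edges B A"
  unfolding biclique_edges_def by (auto simp: insert_commute)

lemma card_biclique_edges:
  assumes "A \<inter> B = {}" "finite A" "finite B"
  shows "card (biclique_edges A B) = card A * card B"
proof -
  have "biclique_edges A B = (\<lambda>(a, b). {a, b}) ` (A \<times> B)"
    unfolding biclique_edges_def by auto
  moreover have "inj_on (\<lambda>(a, b). {a, b}) (A \<times> B)"
    using assms(1) by (auto simp: inj_on_def doubleton_eq_iff)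
  ultimately show ?thesis by (simp add: card_image card_cartesian_product)
qed

definition nonstar_bicliques :: "nat \<Rightarrow> nat set set set" where
  "nonstar_bicliques n = {F. nonstar_biclique n F}"

lemma nonstar_bicliques_subset_all_pairs: "F \<in> nonstar_bicliques n \<Longrightarrow> F \<subseteq> all_pairs n"
  unfolding nonstar_bicliques_def nonstar_biclique_def biclique_edges_def all_pairs_def by blast

lemma finite_nonstar_bicliques: "finite (nonstar_bicliques n)"
  using nonstar_bicliques_subset_all_pairs finite_all_pairs
  by (metis Pow_iff finite_Pow_iff finite_subset subsetI)

definition biclique_weight :: "nat \<Rightarrow> real \<Rightarrow> real" where
  "biclique_weight n x = (\<Sum>F\<in>nonstar_bicliques n. x ^ card F)"

lemma gnp_prob_eq_odds:
  fixes p :: real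
  assumes "p < 1"
  shows "gnp_prob n p P =
    (1 - p) ^ (n choose 2) * (\<Sum>E | E \<subseteq> all_pairs n \<and> P E. (p / (1 - p)) ^ card E)"
proof -
  have "p ^ card E * (1 - p) ^ ((n choose 2) - card E)
      = (1 - p) ^ (n choose 2) * (p / (1 - p)) ^ card E" if "E \<subseteq> all_pairs n" for E
  proof -
    have "card E \<le> n choose 2"
      using card_mono[OF finite_all_pairs that] by (simp add: card_all_pairs)
    then have "(1 - p) ^ (n choose 2) = (1 - p) ^ card E * (1 - p) ^ ((n choose 2) - card E)"
      by (simp flip: power_add)
    then show ?thesis using assms by (simp add: power_divide)
  qed
  then show ?thesis
    unfolding gnp_prob_def card_all_pairs sum_distrib_left by (intro sum.cong) auto
qed

lemma sum_odds_partitionable_le: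
  fixes x :: real
  assumes "0 \<le> x"
  shows "(\<Sum>E | E \<subseteq> all_pairs n \<and> biclique_partitionable n r E. x ^ card E)
    \<le> (\<Sum>k\<le>r. biclique_weight n x ^ k)"
proof -
  define L where "L = {Fs. set Fs \<subseteq> nonstar_bicliques n \<and> length Fs \<le> r}"
  define D where
    "D = {Fs \<in> L. \<forall>i<length Fs. \<forall>j<length Fs. i \<noteq> j \<longrightarrow> Fs ! i \<inter> Fs ! j = {}}"
  have fin_L: "finite L"
    unfolding L_def by (rule finite_lists_length_le[OF finite_nonstar_bicliques])
  have fin_D: "finite D" using fin_L unfolding D_def by simp
  have partitions:
      "{E. E \<subseteq> all_pairs n \<and> biclique_partitionable n r E} \<subseteq> (\<lambda>Fs. \<Union>(set Fs)) ` D"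
    unfolding biclique_partitionable_def D_def L_def nonstar_bicliques_def by blast
  have "(\<Sum>E | E \<subseteq> all_pairs n \<and> biclique_partitionable n r E. x ^ card E)
      \<le> (\<Sum>E\<in>(\<lambda>Fs. \<Union>(set Fs)) ` D. x ^ card E)"
    by (rule sum_mono2[OF finite_imageI[OF fin_D] partitions]) (use assms in auto)
  also have "\<dots> \<le> (\<Sum>Fs\<in>D. x ^ card (\<Union>(set Fs)))"
    using sum_image_le[OF fin_D, of "\<lambda>E. x ^ card E"] assms by (simp add: o_def)
  also have "\<dots> = (\<Sum>Fs\<in>D. prod_list (map (\<lambda>F. x ^ card F) Fs))"
  proof (rule sum.cong[OF refl])
    fix Fs assume "Fs \<in> D"
    then have "card (\<Union>(set Fs)) = sum_list (map card Fs)"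
      unfolding D_def L_def
      by (intro card_Union_list_disjoint)
        (auto dest!: nonstar_bicliques_subset_all_pairs intro: finite_subset[OF _ finite_all_pairs])
    then show "x ^ card (\<Union>(set Fs)) = prod_list (map (\<lambda>F. x ^ card F) Fs)"
      by (simp add: power_sum_list)
  qed
  also have "\<dots> \<le> (\<Sum>Fs\<in>L. prod_list (map (\<lambda>F. x ^ card F) Fs))"
    by (rule sum_mono2[OF fin_L]) (auto simp: D_def assms intro!: prod_list_nonneg)
  also have "\<dots> = (\<Sum>k\<le>r. biclique_weight n x ^ k)"
    unfolding L_def biclique_weight_def by (rule sum_prod_list_lists_length_le[OF finite_nonstar_bicliques])
  finally show ?thesis .
qed

lemma gnp_prob_partitionable_le:
  fixes p :: real
  assumes "0 \<le> p" "p < 1"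
  shows "gnp_prob n p (biclique_partitionable n r)
    \<le> (1 - p) ^ (n choose 2) * (\<Sum>k\<le>r. biclique_weight n (p / (1 - p)) ^ k)"
  unfolding gnp_prob_eq_odds[OF assms(2)]
  using sum_odds_partitionable_le[of "p / (1 - p)" n r] assms
  by (intro mult_left_mono) auto

lemma gnp_prob_partitionable_le_biclique_bound:
  fixes p :: real
  assumes "0 \<le> p" "p < 1" "2 \<le> n"
    and weight: "biclique_weight n (p / (1 - p)) \<le> 2 * real (n choose 2) * (1 + (p / (1 - p))\<^sup>2) ^ n"
  shows "gnp_prob n p (biclique_partitionable n r) \<le> biclique_bound n p r"
proof -
  let ?T = "2 * real (n choose 2) * (1 + (p / (1 - p))\<^sup>2) ^ n"
  have "1 \<le> real (n choose 2)" using assms(3) by (simp add: Suc_leI)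
  moreover have "1 \<le> (1 + (p / (1 - p))\<^sup>2) ^ n" by (simp add: one_le_power)
  ultimately have "2 \<le> ?T" using mult_mono[of 1 "real (n choose 2)" 1] by force
  moreover have "0 \<le> biclique_weight n (p / (1 - p))"
    unfolding biclique_weight_def using assms by (intro sum_nonneg) auto
  ultimately have geometric: "(\<Sum>k\<le>r. biclique_weight n (p / (1 - p)) ^ k) \<le> 2 * ?T ^ r"
    using weight by (intro sum_powers_le_twice_power)
  have "gnp_prob n p (biclique_partitionable n r)
      \<le> (1 - p) ^ (n choose 2) * (\<Sum>k\<le>r. biclique_weight n (p / (1 - p)) ^ k)"
    by (rule gnp_prob_partitionable_le[OF assms(1,2)])
  also have "\<dots> \<le> (1 - p) ^ (n choose 2) * (2 * ?T ^ r)"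
    using geometric assms by (intro mult_left_mono) auto
  also have "\<dots> = biclique_bound n p r" by (simp add: biclique_bound_def)
  finally show ?thesis .
qed

lemma biclique_weight_le_sum_sides:
  fixes x :: real
  assumes "0 \<le> x"
  shows "biclique_weight n x \<le> (\<Sum>A\<in>Pow {..<n}. \<Sum>B\<in>Pow {..<n}.
    if 2 \<le> card A \<and> card A \<le> card B then x ^ (card A * card B) else 0)"
proof -
  let ?V = "Pow {..<n}"
  let ?h = "\<lambda>A B. if 2 \<le> card A \<and> card A \<le> card B then x ^ (card A * card B) else 0"
  define D where "D = {(A, B) \<in> ?V \<times> ?V. A \<inter> B = {} \<and> 2 \<le> card A \<and> card A \<le> card B}"
  have fin_D: "finite D" unfolding D_def by (rule finite_subset[of _ "?V \<times> ?V"]) auto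
  have "nonstar_bicliques n \<subseteq> case_prod biclique_edges ` D"
  proof
    fix F assume "F \<in> nonstar_bicliques n"
    then obtain A B where AB: "A \<subseteq> {..<n}" "B \<subseteq> {..<n}" "A \<inter> B = {}"
      "card A \<ge> 2" "card B \<ge> 2" "F = biclique_edges A B" unfolding nonstar_bicliques_def nonstar_biclique_def by blast
    then have "(A, B) \<in> D \<or> (B, A) \<in> D" unfolding D_def by auto
    moreover have "F = case_prod biclique_edges (A, B)" "F = case_prod biclique_edges (B, A)"
      using AB(6) biclique_edges_commute by simp_all
    ultimately show "F \<in> case_prod biclique_edges ` D" by (metis image_eqI)
  qed
  then have "biclique_weight n x \<le> (\<Sum>F\<in>case_prod biclique_edges ` D. x ^ card F)"
    unfolding biclique_weight_def by (rule sum_mono2[OF finite_imageI[OF fin_D]]) (use assms in auto)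
  also have "\<dots> \<le> (\<Sum>(A, B)\<in>D. x ^ card (biclique_edges A B))"
    using sum_image_le[OF fin_D, of "\<lambda>F. x ^ card F"] assms by (simp add: o_def case_prod_unfold)
  also have "\<dots> = (\<Sum>(A, B)\<in>D. ?h A B)"
    by (rule sum.cong) (auto simp: D_def card_biclique_edges finite_subset[OF _ finite_lessThan])
  also have "\<dots> \<le> (\<Sum>(A, B)\<in>?V \<times> ?V. ?h A B)"
    by (rule sum_mono2) (auto simp: D_def assms split: if_splits)
  also have "\<dots> = (\<Sum>A\<in>?V. \<Sum>B\<in>?V. ?h A B)"
    by (rule sum.cartesian_product[symmetric])
  finally show ?thesis .
qed

lemma biclique_weight_le_split:
  fixes x :: real and f g :: "nat \<Rightarrow> real"
  assumes "0 \<le> x" "\<And>a. 0 \<le> f a" "\<And>b. 0 \<le> g b"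
    and factor: "\<And>a b. 3 \<le> a \<Longrightarrow> a \<le> b \<Longrightarrow> x ^ (a * b) \<le> f a * g b"
  shows "biclique_weight n x \<le> real (n choose 2) * (1 + x\<^sup>2) ^ n +
    (\<Sum>A\<in>Pow {..<n}. f (card A)) * (\<Sum>B\<in>Pow {..<n}. g (card B))"
proof -
  let ?V = "Pow {..<n}"
  have "biclique_weight n x \<le> (\<Sum>A\<in>?V. \<Sum>B\<in>?V.
      if 2 \<le> card A \<and> card A \<le> card B then x ^ (card A * card B) else 0)"
    by (rule biclique_weight_le_sum_sides[OF assms(1)])
  also have "\<dots> \<le> (\<Sum>A\<in>?V. \<Sum>B\<in>?V.
      (if card A = 2 then 1 else 0) * (x\<^sup>2) ^ card B + f (card A) * g (card B))"
  proof (intro sum_mono)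
    fix A B :: "nat set"
    show "(if 2 \<le> card A \<and> card A \<le> card B then x ^ (card A * card B) else 0)
      \<le> (if card A = 2 then 1 else 0) * (x\<^sup>2) ^ card B + f (card A) * g (card B)"
      using factor[of "card A" "card B"] assms(1) assms(2)[of "card A"] assms(3)[of "card B"]
      by (cases "card A = 2") (auto simp: power_mult)
  qed
  also have "\<dots> = (\<Sum>A\<in>?V. if card A = 2 then 1 else 0) * (\<Sum>B\<in>?V. (x\<^sup>2) ^ card B) +
      (\<Sum>A\<in>?V. f (card A)) * (\<Sum>B\<in>?V. g (card B))"
    by (simp add: sum.distrib sum_product)
  also have "(\<Sum>A\<in>?V. if card A = 2 then 1 else 0) = real (card {A \<in> ?V. card A = 2})"
    by (simp add: sum.If_cases Int_def)
  also have "\<dots> = real (n choose 2)"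
    using n_subsets[of "{..<n}" 2] by (simp add: Collect_conj_eq[symmetric] Pow_def)
  also have "(\<Sum>B\<in>?V. (x\<^sup>2) ^ card B) = (1 + x\<^sup>2) ^ n"
    using sum_Pow_power_card[of "{..<n}" "x\<^sup>2"] by simp
  finally show ?thesis .
qed

lemma quadratic_power_le_geometric:
  fixes x z :: real
  assumes "0 \<le> x" "x < 1" "0 < z"
  shows "\<exists>C. \<forall>a. x ^ (a * (a - 3)) \<le> C * z ^ a"
proof -
  obtain K where K: "x ^ K < z" using real_arch_pow_inv[OF assms(3,2)] by blast
  define c where "c = max 1 (1 / z)"
  have "x ^ (a * (a - 3)) \<le> c ^ (K + 3) * z ^ a" for a
  proof (cases "a \<le> K + 3")
    case True
    have "x ^ (a * (a - 3)) \<le> 1" using assms by (simp add: power_le_one)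
    also have "\<dots> = (1 / z) ^ a * z ^ a" using assms by (simp add: power_one_over)
    also have "\<dots> \<le> c ^ (K + 3) * z ^ a"
    proof (intro mult_right_mono)
      have "(1 / z) ^ a \<le> c ^ a" using assms by (intro power_mono) (auto simp: c_def)
      also have "\<dots> \<le> c ^ (K + 3)" using True by (intro power_increasing) (auto simp: c_def)
      finally show "(1 / z) ^ a \<le> c ^ (K + 3)" .
    qed (use assms in simp)
    finally show ?thesis .
  next
    case False
    have "x ^ (a * (a - 3)) = (x ^ (a - 3)) ^ a" by (simp add: power_mult[symmetric] mult.commute)
    also have "\<dots> \<le> (x ^ K) ^ a"
      using assms False by (intro power_mono power_decreasing) auto
    also have "\<dots> \<le> z ^ a" using assms K by (intro power_mono) auto
    also have "\<dots> \<le> c ^ (K + 3) * z ^ a"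
      using assms by (simp add: mult_le_cancel_right1 one_le_power c_def)
    finally show ?thesis .
  qed
  then show ?thesis by blast
qed

lemma eventually_mult_power_le_power:
  fixes C w u :: real
  assumes "0 < w" "w < u"
  shows "\<exists>M. \<forall>n > M. C * w ^ n \<le> u ^ n"
proof -
  obtain M where M: "C < (u / w) ^ M" using real_arch_pow[of "u / w"] assms by auto
  have "C * w ^ n \<le> u ^ n" if "n > M" for n
  proof -
    have "C \<le> (u / w) ^ n"
      using M that assms by (smt (verit) less_divide_eq_1_pos power_increasing less_imp_le)
    then have "C * w ^ n \<le> (u / w) ^ n * w ^ n" using assms by (intro mult_right_mono) auto
    also have "\<dots> = u ^ n" using assms by (simp add: power_divide)
    finally show ?thesis .
  qed
  then show ?thesis by blast
qed

lemma biclique_weight_eventually_le: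
  fixes x :: real
  assumes "0 < x" "x < 1"
  shows "\<exists>M. \<forall>n > M. biclique_weight n x \<le> 2 * real (n choose 2) * (1 + x\<^sup>2) ^ n"
proof -
  have x32: "x ^ 3 < x\<^sup>2" using assms by (simp add: power_strict_decreasing)
  define z where "z = (x\<^sup>2 - x ^ 3) / 4"
  have z: "0 < z" using x32 by (simp add: z_def)
  obtain C where C: "\<And>a. x ^ (a * (a - 3)) \<le> C * z ^ a"
    using quadratic_power_le_geometric[of x z] assms z by auto
  have "0 \<le> C" using C[of 0] by simp
  define w where "w = (1 + z) * (1 + x ^ 3)"
  have w_pos: "0 < w" using z assms by (simp add: w_def add_pos_pos)
  have w_less: "w < 1 + x\<^sup>2"
  proof -
    have "z * x ^ 3 \<le> z" using z assms by (simp add: power_le_one)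
    then have "w \<le> 1 + x ^ 3 + 2 * z" by (simp add: w_def algebra_simps)
    also have "\<dots> < 1 + x\<^sup>2" using x32 by (simp add: z_def field_simps)
    finally show ?thesis .
  qed
  have dense: "biclique_weight n x \<le> real (n choose 2) * (1 + x\<^sup>2) ^ n + C * w ^ n" for n
  proof -
    have factor: "x ^ (a * b) \<le> (C * z ^ a) * (x ^ 3) ^ b" if a3: "3 \<le> a" and ab: "a \<le> b" for a b
    proof -
      obtain c where c: "a = 3 + c" using le_Suc_ex[OF a3] by blast
      have "c * (3 + c) \<le> c * b" using ab c by (intro mult_le_mono2) simp
      then have "3 * b + a * (a - 3) \<le> a * b" using c by (simp add: algebra_simps)
      then have "x ^ (a * b) \<le> x ^ (3 * b + a * (a - 3))"
        using assms by (intro power_decreasing) auto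
      also have "\<dots> = (x ^ 3) ^ b * x ^ (a * (a - 3))" by (simp add: power_add power_mult)
      also have "\<dots> \<le> (x ^ 3) ^ b * (C * z ^ a)" using C assms by (intro mult_left_mono) auto
      finally show ?thesis by (simp add: mult.commute)
    qed
    have "biclique_weight n x \<le> real (n choose 2) * (1 + x\<^sup>2) ^ n +
        (\<Sum>A\<in>Pow {..<n}. C * z ^ card A) * (\<Sum>B\<in>Pow {..<n}. (x ^ 3) ^ card B)"
      by (rule biclique_weight_le_split[OF _ _ _ factor]) (use \<open>0 \<le> C\<close> z assms in simp_all)
    also have "\<dots> = real (n choose 2) * (1 + x\<^sup>2) ^ n + C * w ^ n"
      by (simp add: sum_distrib_left[symmetric] sum_Pow_power_card w_def power_mult_distrib)
    finally show ?thesis .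
  qed
  obtain M where M: "\<And>n. n > M \<Longrightarrow> C * w ^ n \<le> (1 + x\<^sup>2) ^ n"
    using eventually_mult_power_le_power[OF w_pos w_less] by blast
  have "biclique_weight n x \<le> 2 * real (n choose 2) * (1 + x\<^sup>2) ^ n" if "n > max M 1" for n
  proof -
    have "1 \<le> real (n choose 2)" using that by (simp add: Suc_leI)
    then have "(1 + x\<^sup>2) ^ n \<le> real (n choose 2) * (1 + x\<^sup>2) ^ n"
      using mult_right_mono[of 1 "real (n choose 2)" "(1 + x\<^sup>2) ^ n"] by simp
    then show ?thesis using dense[of n] M[of n] that by simp
  qed
  then show ?thesis by blast
qed

lemma biclique_weight_le_tail:
  fixes x :: real
  assumes "0 \<le> x" "x \<le> 1"
  shows "biclique_weight n x \<le> real (n choose 2) * (1 + x\<^sup>2) ^ n +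
    x ^ 9 * (real (n choose 3) * (1 + x ^ 3) ^ n)\<^sup>2"
proof -
  define f where "f a = (if 3 \<le> a then (x ^ 3) ^ (a - 3) else 0)" for a :: nat
  have f_nonneg: "0 \<le> f a" for a using assms by (simp add: f_def)
  have factor: "x ^ (a * b) \<le> f a * (x ^ 9 * f b)" if a3: "3 \<le> a" and ab: "a \<le> b" for a b
  proof -
    obtain c d where cd: "a = 3 + c" "b = 3 + d"
      using le_Suc_ex[OF a3] le_Suc_ex[OF order_trans[OF a3 ab]] by blast
    have "9 + 3 * c + 3 * d \<le> a * b" using cd by (simp add: algebra_simps)
    then have "x ^ (a * b) \<le> x ^ (9 + 3 * c + 3 * d)"
      using assms by (intro power_decreasing) auto
    also have "\<dots> = (x ^ 3) ^ c * (x ^ 9 * (x ^ 3) ^ d)"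
      by (simp only: power_add power_mult) (simp add: mult_ac)
    also have "\<dots> = f a * (x ^ 9 * f b)" using cd by (simp add: f_def)
    finally show ?thesis .
  qed
  have tail: "(\<Sum>A\<in>Pow {..<n}. f (card A)) \<le> real (n choose 3) * (1 + x ^ 3) ^ n"
    using sum_Pow_shifted_power_le[of "{..<n}" "x ^ 3" 3] assms by (simp add: f_def)
  have "biclique_weight n x \<le> real (n choose 2) * (1 + x\<^sup>2) ^ n +
      (\<Sum>A\<in>Pow {..<n}. f (card A)) * (\<Sum>B\<in>Pow {..<n}. x ^ 9 * f (card B))"
    by (rule biclique_weight_le_split[OF assms(1) f_nonneg _ factor])
      (use assms f_nonneg in simp_all)
  also have "\<dots> = real (n choose 2) * (1 + x\<^sup>2) ^ n
      + x ^ 9 * (\<Sum>A\<in>Pow {..<n}. f (card A))\<^sup>2"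
    by (simp add: sum_distrib_left[symmetric] power2_eq_square)
  also have "\<dots> \<le> real (n choose 2) * (1 + x\<^sup>2) ^ n
      + x ^ 9 * (real (n choose 3) * (1 + x ^ 3) ^ n)\<^sup>2"
    using tail assms by (intro add_left_mono mult_left_mono power_mono) (auto intro: sum_nonneg f_nonneg)
  finally show ?thesis .
qed

text \<open>The bound 3/128 on x is exactly what this inequality needs at n = 4.\<close>

lemma choose_3_squared_le:
  fixes x :: real
  assumes "0 \<le> x" "x \<le> 3 / 128" "4 \<le> n"
  shows "16 * x * (real (n choose 3))\<^sup>2 \<le> real (n choose 2) * real (n choose 4)"
proof -
  have c3: "3 * real (n choose 3) = (real n - 2) * real (n choose 2)"
  proof -
    have "3 * (n choose 3) = (n - 2) * (n choose 2)" using Suc_times_choose_Suc[of 2 n] by simp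
    then have "real (3 * (n choose 3)) = real ((n - 2) * (n choose 2))" by (rule arg_cong)
    then show ?thesis using assms(3) by (simp add: of_nat_diff)
  qed
  have c4: "4 * real (n choose 4) = (real n - 3) * real (n choose 3)"
  proof -
    have "4 * (n choose 4) = (n - 3) * (n choose 3)" using Suc_times_choose_Suc[of 3 n] by simp
    then have "real (4 * (n choose 4)) = real ((n - 3) * (n choose 3))" by (rule arg_cong)
    then show ?thesis using assms(3) by (simp add: of_nat_diff)
  qed
  have ineq: "64 * x * (real n - 2) \<le> 3 * (real n - 3)"
  proof -
    have "64 * x * (real n - 2) \<le> 64 * (3 / 128) * (real n - 2)"
      using assms by (intro mult_right_mono mult_left_mono) auto
    then show ?thesis using assms by simp
  qed
  have "12 * (16 * x * (real (n choose 3))\<^sup>2)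
      \<le> 12 * (real (n choose 2) * real (n choose 4))"
  proof -
    have "12 * (16 * x * (real (n choose 3))\<^sup>2)
        = (64 * x * real (n choose 3)) * (3 * real (n choose 3))"
      by (simp add: power2_eq_square)
    also have "\<dots> = (64 * x * (real n - 2)) * (real (n choose 2) * real (n choose 3))"
      unfolding c3 by (simp add: algebra_simps)
    also have "\<dots> \<le> (3 * (real n - 3)) * (real (n choose 2) * real (n choose 3))"
      using ineq by (intro mult_right_mono) auto
    also have "\<dots> = 3 * real (n choose 2) * ((real n - 3) * real (n choose 3))"
      by (simp add: algebra_simps)
    also have "\<dots> = 12 * (real (n choose 2) * real (n choose 4))"
      unfolding c4[symmetric] by simp
    finally show ?thesis .
  qed
  then show ?thesis by simp
qed

lemma one_plus_cube_squared_le: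
  fixes x :: real
  assumes "0 \<le> x" "x \<le> 1 / 10"
  shows "(1 + x ^ 3)\<^sup>2 * (1 + x\<^sup>2 / 2) \<le> 1 + x\<^sup>2"
proof -
  have "x ^ 3 \<le> x\<^sup>2 / 10"
    using mult_left_mono[OF assms(2), of "x\<^sup>2"] assms by (simp add: power3_eq_cube power2_eq_square)
  moreover have "x ^ 5 \<le> x ^ 3" "x ^ 6 \<le> x ^ 3" "x ^ 8 \<le> x ^ 3"
    using assms by (auto intro!: power_decreasing)
  moreover have "(1 + x ^ 3)\<^sup>2 * (1 + x\<^sup>2 / 2)
      = 1 + x\<^sup>2 / 2 + 2 * x ^ 3 + x ^ 5 + x ^ 6 + x ^ 8 / 2"
    by (simp add: eval_nat_numeral algebra_simps)
  moreover have "0 \<le> x\<^sup>2" by simp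
  ultimately show ?thesis by linarith
qed

lemma tail_le_small_odds:
  fixes x :: real
  assumes "0 \<le> x" "x \<le> 3 / 128" "4 \<le> n"
  shows "x ^ 9 * (real (n choose 3) * (1 + x ^ 3) ^ n)\<^sup>2 \<le> real (n choose 2) * (1 + x\<^sup>2) ^ n"
proof -
  have "x ^ 9 * (real (n choose 3) * (1 + x ^ 3) ^ n)\<^sup>2
      = (16 * x * (real (n choose 3))\<^sup>2) * (x\<^sup>2 / 2) ^ 4 * ((1 + x ^ 3)\<^sup>2) ^ n"
  proof -
    have "x ^ 9 * (c * p)\<^sup>2 = (16 * x * c\<^sup>2) * (x ^ 8 / 16) * p\<^sup>2" for c p :: real
      by algebra
    moreover have "(x\<^sup>2 / 2) ^ 4 = x ^ 8 / 16" by (simp add: power_divide flip: power_mult)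
    ultimately show ?thesis by (simp add: mult.commute flip: power_mult)
  qed
  also have "\<dots>
      \<le> (real (n choose 2) * real (n choose 4)) * (x\<^sup>2 / 2) ^ 4 * ((1 + x ^ 3)\<^sup>2) ^ n"
    using choose_3_squared_le[OF assms] by (intro mult_right_mono) auto
  also have "\<dots>
      = real (n choose 2) * (real (n choose 4) * (x\<^sup>2 / 2) ^ 4) * ((1 + x ^ 3)\<^sup>2) ^ n"
    by (simp add: mult_ac)
  also have "\<dots> \<le> real (n choose 2) * (1 + x\<^sup>2 / 2) ^ n * ((1 + x ^ 3)\<^sup>2) ^ n"
    using binomial_term_le_power[of "x\<^sup>2 / 2" 4 n] assms by (intro mult_right_mono mult_left_mono) auto
  also have "\<dots> = real (n choose 2) * ((1 + x ^ 3)\<^sup>2 * (1 + x\<^sup>2 / 2)) ^ n"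
    by (simp add: power_mult_distrib)
  also have "\<dots> \<le> real (n choose 2) * (1 + x\<^sup>2) ^ n"
    using one_plus_cube_squared_le[of x] assms by (intro mult_left_mono power_mono) auto
  finally show ?thesis .
qed

lemma biclique_weight_le_small_odds:
  fixes x :: real
  assumes "0 \<le> x" "x \<le> 3 / 128" "4 \<le> n"
  shows "biclique_weight n x \<le> 2 * real (n choose 2) * (1 + x\<^sup>2) ^ n"
  using biclique_weight_le_tail[of x n] tail_le_small_odds[OF assms] assms by simp

theorem mainTheorem6:
  fixes p :: real
  assumes "0 < p" and "p < 1/2"
  shows "(\<exists>M :: nat. \<forall>n > M. \<forall>r :: nat.
            gnp_prob n p (biclique_partitionable n r) \<le> biclique_bound n p r) \<and>
         (p < 0.01 \<longrightarrow> (\<forall>n \<ge> 4. \<forall>r :: nat.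
            gnp_prob n p (biclique_partitionable n r) \<le> biclique_bound n p r))"
proof
  define x where "x = p / (1 - p)"
  have p: "0 \<le> p" "p < 1" using assms by auto
  have x: "0 < x" "x < 1" using assms by (auto simp: x_def field_simps)
  obtain M where "\<forall>n > M. biclique_weight n x \<le> 2 * real (n choose 2) * (1 + x\<^sup>2) ^ n"
    using biclique_weight_eventually_le[OF x] by blast
  then show "\<exists>M :: nat. \<forall>n > M. \<forall>r :: nat.
      gnp_prob n p (biclique_partitionable n r) \<le> biclique_bound n p r"
    by (intro exI[of _ "max M 1"] allI impI gnp_prob_partitionable_le_biclique_bound[OF p])
      (auto simp: x_def)
  show "p < 0.01 \<longrightarrow> (\<forall>n \<ge> 4. \<forall>r :: nat.
      gnp_prob n p (biclique_partitionable n r) \<le> biclique_bound n p r)"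
  proof (intro impI allI)
    fix n r :: nat
    assume "p < 0.01" and n: "4 \<le> n"
    then have "x \<le> 3 / 128" using assms by (simp add: x_def field_simps)
    then show "gnp_prob n p (biclique_partitionable n r) \<le> biclique_bound n p r"
      using biclique_weight_le_small_odds[of x n] x n
      by (intro gnp_prob_partitionable_le_biclique_bound[OF p]) (auto simp: x_def)
  qed
qed

end
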